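(* Let $\ell\le L_1$ be positive integers and $L\ge2$, and let $\mathcal M$ be a $(p,n,L_1)$-multi-labelling of an $L$-graph with $r(\mathcal M)\le L/2$. For $j\in[p]$ let $N^c_j$ be the number of $p$-vertices whose tuple contains $j$. Then $$\sum_{j:\,N^c_j\ge3}N^c_j\le\big(6\Delta(\mathcal M)-6\big)\ell.$$
   Context: An $L$-graph is a cycle with $2L$ vertices alternating between $n$-vertices and $p$-vertices. A $(p,n,L_1)$-multi-labelling assigns an $n$-label in $[n]$ to each $n$-vertex and a tuple of $d_r$ distinct $p$-labels in $[p]$ ($\ell\le d_r\le L_1$) to the $r$-th $p$-vertex, such that the $n$-label of each $n$-vertex differs from those of the $n$-vertices immediately preceding and following it in the cycle, and for each $n$-label $i$ and $p$-label $j$ the number of edges with $n$-endpoint labelled $i$ and $p$-endpoint's tuple containing $j$ is $0$ or $\ge2$. $r(\mathcal M)$ and $c(\mathcal M)$ are the numbers of distinct $n$- and $p$-labels, and $\Delta(\mathcal M)=1+\frac L2+\sum_{r=1}^L\frac{d_r}{2\ell}-r(\mathcal M)-\frac{c(\mathcal M)}{\ell}$. *)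

theory Defs
  imports Main "HOL-Library.Library"
begin

text \<open>An L-graph: the cycle v_0, w_0, v_1, w_1, ..., v_(L-1), w_(L-1), v_0 with
  n-vertices v_r and p-vertices w_r (indices r < L).  The p-vertex w_r is adjacent
  to the n-vertices v_r and v_((r+1) mod L).  A labelling is given by
  NL r (the n-label of v_r) and PL r (the set of p-labels of w_r; the tuple of
  distinct labels is represented by its underlying set, d_r = card (PL r)).\<close>

definition nxt :: "nat \<Rightarrow> nat \<Rightarrow> nat" where
  "nxt L r = Suc r mod L"

definition edge_count :: "nat \<Rightarrow> (nat \<Rightarrow> nat) \<Rightarrow> (nat \<Rightarrow> nat set) \<Rightarrow> nat \<Rightarrow> nat \<Rightarrow> nat" where
  "edge_count L NL PL i j =
     card {r. r < L \<and> NL r = i \<and> j \<in> PL r} + card {r. r < L \<and> NL (nxt L r) = i \<and> j \<in> PL r}"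

definition multi_labelling ::
  "nat \<Rightarrow> nat \<Rightarrow> nat \<Rightarrow> nat \<Rightarrow> nat \<Rightarrow> (nat \<Rightarrow> nat) \<Rightarrow> (nat \<Rightarrow> nat set) \<Rightarrow> bool" where
  "multi_labelling p n L1 ell L NL PL \<longleftrightarrow>
     (\<forall>r<L. NL r \<in> {1..n}) \<and>
     (\<forall>r<L. PL r \<subseteq> {1..p} \<and> ell \<le> card (PL r) \<and> card (PL r) \<le> L1) \<and>
     (\<forall>r<L. NL r \<noteq> NL (nxt L r)) \<and>
     (\<forall>i j. edge_count L NL PL i j = 0 \<or> edge_count L NL PL i j \<ge> 2)"

definition r_num :: "nat \<Rightarrow> (nat \<Rightarrow> nat) \<Rightarrow> nat" where
  "r_num L NL = card (NL ` {..<L})"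

definition c_num :: "nat \<Rightarrow> (nat \<Rightarrow> nat set) \<Rightarrow> nat" where
  "c_num L PL = card (\<Union>r<L. PL r)"

definition Delta :: "nat \<Rightarrow> nat \<Rightarrow> (nat \<Rightarrow> nat) \<Rightarrow> (nat \<Rightarrow> nat set) \<Rightarrow> real" where
  "Delta ell L NL PL = 1 + real L / 2 + (\<Sum>r<L. real (card (PL r)) / (2 * real ell))
      - real (r_num L NL) - real (c_num L PL) / real ell"

definition Nc :: "nat \<Rightarrow> (nat \<Rightarrow> nat set) \<Rightarrow> nat \<Rightarrow> nat" where
  "Nc L PL j = card {r. r < L \<and> j \<in> PL r}"

end

theory Submission
  imports Defs
begin

text \<open>A label carried by a single p-vertex would give exactly one edge between it and the
  n-label of one neighbour of that p-vertex (the two neighbours carry different n-labels),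
  which the edge-count condition forbids. Hence every count \<open>N\<^sup>c\<^sub>j\<close> is \<open>0\<close>, \<open>2\<close> or at least
  \<open>3\<close>, and in each case \<open>[N\<^sup>c\<^sub>j \<ge> 3] N\<^sup>c\<^sub>j \<le> 3 N\<^sup>c\<^sub>j - 6 [N\<^sup>c\<^sub>j > 0]\<close>. Summing over
  the labels, \<open>\<Sum>\<^sub>j N\<^sup>c\<^sub>j = \<Sum>\<^sub>r d\<^sub>r\<close> by double counting and \<open>\<Sum>\<^sub>j [N\<^sup>c\<^sub>j > 0] = c(\<M>)\<close>, while
  \<open>(6\<Delta> - 6)\<ell> = 3\<Sum>\<^sub>r d\<^sub>r - 6c(\<M>) + 3\<ell>(L - 2r(\<M>))\<close> and the last term is nonnegative.\<close>

lemma Nc_ne_1: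
  assumes "multi_labelling p n L1 ell L NL PL"
  shows "Nc L PL j \<noteq> 1"
proof
  assume "Nc L PL j = 1"
  then obtain r0 where carriers: "{r. r < L \<and> j \<in> PL r} = {r0}"
    unfolding Nc_def by (auto simp: card_Suc_eq)
  then have r0: "r0 < L" "j \<in> PL r0" by auto
  have left: "{r. r < L \<and> NL r = NL r0 \<and> j \<in> PL r} = {r0}"
    using carriers by auto
  have unique: "r = r0" if "r < L" "j \<in> PL r" for r
    using carriers that by blast
  have "NL (nxt L r0) \<noteq> NL r0"
    using assms r0 unfolding multi_labelling_def by auto
  then have right: "{r. r < L \<and> NL (nxt L r) = NL r0 \<and> j \<in> PL r} = {}"
    using unique by auto
  have "edge_count L NL PL (NL r0) j = 1"
    unfolding edge_count_def left right by simp
  moreover have "edge_count L NL PL (NL r0) j = 0 \<or> edge_count L NL PL (NL r0) j \<ge> 2"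
    using assms unfolding multi_labelling_def by blast
  ultimately show False by simp
qed

lemma sum_Nc_eq_sum_card:
  assumes "finite A" and "\<And>r. r < L \<Longrightarrow> PL r \<subseteq> A"
  shows "(\<Sum>j\<in>A. Nc L PL j) = (\<Sum>r<L. card (PL r))"
proof -
  have "(\<Sum>j\<in>A. Nc L PL j) = (\<Sum>j\<in>A. \<Sum>r<L. if j \<in> PL r then 1 else 0)"
    unfolding Nc_def by (simp add: sum.If_cases Int_def conj_commute lessThan_def)
  also have "\<dots> = (\<Sum>r<L. \<Sum>j\<in>A. if j \<in> PL r then 1 else 0)"
    by (rule sum.swap)
  also have "\<dots> = (\<Sum>r<L. card (PL r))"
  proof (rule sum.cong)
    fix r assume "r \<in> {..<L}"
    then have "A \<inter> {j. j \<in> PL r} = PL r" using assms(2) by auto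
    then show "(\<Sum>j\<in>A. if j \<in> PL r then 1 else 0) = card (PL r)"
      using assms(1) by (simp add: sum.If_cases)
  qed simp
  finally show ?thesis .
qed

lemma c_num_eq_card_Nc_pos:
  assumes "\<And>r. r < L \<Longrightarrow> PL r \<subseteq> A"
  shows "c_num L PL = card {j\<in>A. 0 < Nc L PL j}"
proof -
  have "0 < Nc L PL j \<longleftrightarrow> (\<exists>r<L. j \<in> PL r)" for j
    unfolding Nc_def by (auto simp: card_gt_0_iff)
  then have "(\<Union>r<L. PL r) = {j\<in>A. 0 < Nc L PL j}"
    using assms by fastforce
  then show ?thesis unfolding c_num_def by simp
qed

lemma sum_ge_3_le_if_ne_1:
  fixes f :: "'a \<Rightarrow> nat"
  assumes "finite A" and "\<And>j. j \<in> A \<Longrightarrow> f j \<noteq> 1"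
  shows "real (\<Sum>j\<in>{j\<in>A. 3 \<le> f j}. f j)
           \<le> 3 * real (\<Sum>j\<in>A. f j) - 6 * real (card {j\<in>A. 0 < f j})"
proof -
  have "real (\<Sum>j\<in>{j\<in>A. 3 \<le> f j}. f j) = (\<Sum>j\<in>A. if 3 \<le> f j then real (f j) else 0)"
    using assms(1) by (simp add: sum.If_cases Int_def conj_commute)
  also have "\<dots> \<le> (\<Sum>j\<in>A. 3 * real (f j) - (if 0 < f j then 6 else 0))"
  proof (rule sum_mono)
    fix j assume "j \<in> A"
    then have "f j \<noteq> 1" using assms(2) by blast
    then show "(if 3 \<le> f j then real (f j) else 0) \<le> 3 * real (f j) - (if 0 < f j then 6 else 0)"
      by auto
  qed
  also have "\<dots> = 3 * real (\<Sum>j\<in>A. f j) - 6 * real (card {j\<in>A. 0 < f j})"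
    using assms(1) by (simp add: sum_subtractf sum_distrib_left sum.If_cases Int_def conj_commute)
  finally show ?thesis .
qed

lemma Delta_scaled:
  assumes "0 < ell"
  shows "(6 * Delta ell L NL PL - 6) * real ell
           = 3 * real (\<Sum>r<L. card (PL r)) - 6 * real (c_num L PL)
             + 3 * real ell * (real L - 2 * real (r_num L NL))"
proof -
  have "(\<Sum>r<L. real (card (PL r)) / (2 * real ell)) = real (\<Sum>r<L. card (PL r)) / (2 * real ell)"
    by (simp add: sum_divide_distrib)
  then show ?thesis
    unfolding Delta_def using assms by (simp add: field_simps)
qed

theorem lemmaC4:
  fixes p n L1 ell L :: nat and NL :: "nat \<Rightarrow> nat" and PL :: "nat \<Rightarrow> nat set"
  assumes "0 < ell" and "ell \<le> L1" and "2 \<le> L"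
    and "multi_labelling p n L1 ell L NL PL"
    and "real (r_num L NL) \<le> real L / 2"
  shows "real (\<Sum>j\<in>{j\<in>{1..p}. Nc L PL j \<ge> 3}. Nc L PL j)
           \<le> (6 * Delta ell L NL PL - 6) * real ell"
proof -
  have labels: "\<And>r. r < L \<Longrightarrow> PL r \<subseteq> {1..p}"
    using assms(4) unfolding multi_labelling_def by auto
  have "real (\<Sum>j\<in>{j\<in>{1..p}. Nc L PL j \<ge> 3}. Nc L PL j)
          \<le> 3 * real (\<Sum>j\<in>{1..p}. Nc L PL j) - 6 * real (card {j\<in>{1..p}. 0 < Nc L PL j})"
    using Nc_ne_1[OF assms(4)] by (intro sum_ge_3_le_if_ne_1) auto
  also have "\<dots> = 3 * real (\<Sum>r<L. card (PL r)) - 6 * real (c_num L PL)"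
    using sum_Nc_eq_sum_card[OF _ labels] c_num_eq_card_Nc_pos[OF labels] by simp
  also have "\<dots> \<le> (6 * Delta ell L NL PL - 6) * real ell"
    unfolding Delta_scaled[OF assms(1)] using assms(5) by simp
  finally show ?thesis .
qed

end
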